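(* Let $S$ be an inverse semigroup, regarded as an algebraic structure in the language $\mathcal{L}=\{\cdot,{}^{-1}\}\cup\{s\mid s\in S\}$, and let $E=\{e\in S\mid ee=e\}$ be its set of idempotents. Suppose $E$ is linearly ordered by the natural order on idempotents and $|E|>1$. Then $S$ is not an equational domain in the language $\mathcal{L}$.
   Context: A semigroup $S$ is inverse if for every $s\in S$ there is a unique $s^{-1}\in S$ with $ss^{-1}s=s$ and $s^{-1}ss^{-1}=s^{-1}$; its idempotents commute. The natural order on idempotents is $e\le f \iff ef=e$. The language $\mathcal{L}$ consists of multiplication, inversion, and a constant symbol for every element of $S$. For variables $x_1,\dots,x_n$, a term of $\mathcal{L}$ is a finite product of variables raised to integer powers and constants from $S$. An equation is an equality of two terms; a system of equations is an arbitrary set of equations in $x_1,\dots,x_n$. A set $Y\subseteq S^n$ is algebraic over $S$ if it is the set of all tuples in $S^n$ satisfying all equations of some system. $S$ is an equational domain (in $\mathcal{L}$) if for every $n$, every finite union of algebraic subsets of $S^n$ is algebraic. *)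

theory Defs
  imports Main
begin

definition inverse_semigroup :: "'a::semigroup_mult itself \<Rightarrow> bool" where
  "inverse_semigroup _ \<longleftrightarrow> (\<forall>s::'a. \<exists>!t. s * t * s = s \<and> t * s * t = t)"

definition sinv :: "'a::semigroup_mult \<Rightarrow> 'a" where
  "sinv s = (THE t. s * t * s = s \<and> t * s * t = t)"

definition idempotents :: "'a::semigroup_mult set" where
  "idempotents = {e. e * e = e}"

definition nat_le_idem :: "'a::semigroup_mult \<Rightarrow> 'a \<Rightarrow> bool" where
  "nat_le_idem e f \<longleftrightarrow> e * f = e"

datatype 'a trm = Var nat | Const 'a | Mul "'a trm" "'a trm" | Inv "'a trm"

fun eval :: "'a::semigroup_mult list \<Rightarrow> 'a trm \<Rightarrow> 'a" where
  "eval p (Var i) = p ! i"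
| "eval p (Const c) = c"
| "eval p (Mul t u) = eval p t * eval p u"
| "eval p (Inv t) = sinv (eval p t)"

fun vars :: "'a trm \<Rightarrow> nat set" where
  "vars (Var i) = {i}"
| "vars (Const c) = {}"
| "vars (Mul t u) = vars t \<union> vars u"
| "vars (Inv t) = vars t"

text \<open>Points of S^n are lists of length n; a system of equations in x_0..x_{n-1}
  is an arbitrary set of pairs of terms in these variables.\<close>
definition algebraic :: "nat \<Rightarrow> 'a::semigroup_mult list set \<Rightarrow> bool" where
  "algebraic n Y \<longleftrightarrow> (\<exists>Sys :: ('a trm \<times> 'a trm) set.
      (\<forall>(t, u)\<in>Sys. vars t \<union> vars u \<subseteq> {..<n}) \<and>
      Y = {p. length p = n \<and> (\<forall>(t, u)\<in>Sys. eval p t = eval p u)})"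

definition equational_domain :: "'a::semigroup_mult itself \<Rightarrow> bool" where
  "equational_domain _ \<longleftrightarrow> (\<forall>n. \<forall>\<Y> :: 'a list set set.
      finite \<Y> \<and> \<Y> \<noteq> {} \<and> (\<forall>Y\<in>\<Y>. algebraic n Y) \<longrightarrow> algebraic n (\<Union>\<Y>))"

end

theory Submission
  imports Defs
begin

text \<open>If e < f are idempotents, the set {(f, e), (e, f)} is a union of two algebraic sets that is
  not algebraic: every equation satisfied at both points is also satisfied at (e, e). The reason is
  that, writing a, b, c for the values of a term at (f, e), (e, f), (e, e), the element c is
  simultaneously the restriction of a to the domain and range of b and vice versa
  (c = b b\<inverse> a = a a\<inverse> b = a b\<inverse> b = b a\<inverse> a), and this relation is
  preserved by multiplication and inversion.\<close>

definition mutual_restriction :: "'a::semigroup_mult \<Rightarrow> 'a \<Rightarrow> 'a \<Rightarrow> bool" where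
  "mutual_restriction a b c \<longleftrightarrow>
     c = b * sinv b * a \<and> c = a * sinv a * b \<and> c = a * (sinv b * b) \<and> c = b * (sinv a * a)"

lemma algebraic_singleton:
  fixes p :: "'a::semigroup_mult list"
  assumes "length p = n"
  shows "algebraic n {p}"
  unfolding algebraic_def
proof (intro exI conjI)
  let ?Sys = "(\<lambda>i. (Var i, Const (p ! i))) ` {..<n} :: ('a trm \<times> 'a trm) set"
  show "\<forall>(t, u)\<in>?Sys. vars t \<union> vars u \<subseteq> {..<n}" by auto
  show "{p} = {q. length q = n \<and> (\<forall>(t, u)\<in>?Sys. eval q t = eval q u)}"
    using assms by (auto intro: nth_equalityI)
qed

context
  assumes inverse: "inverse_semigroup TYPE('a::semigroup_mult)"
begin

lemma sinv_unique: "\<exists>!t. (s::'a) * t * s = s \<and> t * s * t = t"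
  using inverse unfolding inverse_semigroup_def by blast

lemma mult_sinv_mult: "(s::'a) * sinv s * s = s"
  and sinv_mult_sinv: "sinv (s::'a) * s * sinv s = sinv s"
  using theI'[OF sinv_unique[of s]] unfolding sinv_def by auto

lemma sinv_eqI: "(s::'a) * t * s = s \<Longrightarrow> t * s * t = t \<Longrightarrow> sinv s = t"
  unfolding sinv_def using sinv_unique by (simp add: the1_equality)

lemma sinv_sinv [simp]: "sinv (sinv (s::'a)) = s"
  using sinv_eqI mult_sinv_mult sinv_mult_sinv by blast

lemma sinv_idempotent: "(e::'a) * e = e \<Longrightarrow> sinv e = e"
  using sinv_eqI[of e e] by simp

lemma mult_sinv_idempotent: "(s::'a) * sinv s * (s * sinv s) = s * sinv s"
  and sinv_mult_idempotent: "sinv (s::'a) * s * (sinv s * s) = sinv s * s"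
  by (metis mult_sinv_mult sinv_mult_sinv mult.assoc)+

lemma idempotent_mult:
  assumes e: "(e::'a) * e = e" and f: "f * f = f"
  shows "e * f * (e * f) = e * f"
proof -
  define x where "x = sinv (e * f)"
  have x1: "e * f * x * (e * f) = e * f" and x2: "x * (e * f) * x = x"
    unfolding x_def by (rule mult_sinv_mult, rule sinv_mult_sinv)
  have "e * f * (f * x * e) * (e * f) = e * (f * f) * x * (e * e) * f"
    by (simp add: mult.assoc)
  with e f x1 have y1: "e * f * (f * x * e) * (e * f) = e * f"
    by (simp add: mult.assoc)
  have "f * x * e * (e * f) * (f * x * e) = f * (x * (e * e) * (f * f) * x) * e"
    by (simp add: mult.assoc)
  with e f x2 have y2: "f * x * e * (e * f) * (f * x * e) = f * x * e"
    by (simp add: mult.assoc)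
  \<comment> \<open>uniqueness of inverses forces x = f x e, which makes x idempotent\<close>
  have x_eq: "x = f * x * e"
    using sinv_eqI[OF y1 y2] unfolding x_def .
  have x_idem: "x * x = x"
    using x2 x_eq by (metis mult.assoc)
  have "e * f = x"
    using sinv_eqI[OF x2 x1] sinv_idempotent[OF x_idem] by simp
  with x_idem show ?thesis by simp
qed

lemma idempotents_commute:
  assumes e: "(e::'a) * e = e" and f: "f * f = f"
  shows "e * f = f * e"
proof -
  have ef: "e * f * (e * f) = e * f" and fe: "f * e * (f * e) = f * e"
    using idempotent_mult e f by blast+
  have "e * f * (f * e) * (e * f) = e * (f * f) * (e * e) * f"
    by (simp add: mult.assoc)
  with e f ef have "e * f * (f * e) * (e * f) = e * f"
    by (simp add: mult.assoc)
  moreover have "f * e * (e * f) * (f * e) = f * (e * e) * (f * f) * e"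
    by (simp add: mult.assoc)
  with e f fe have "f * e * (e * f) * (f * e) = f * e"
    by (simp add: mult.assoc)
  ultimately have "sinv (e * f) = f * e"
    by (rule sinv_eqI)
  then show ?thesis
    using sinv_idempotent[OF ef] by simp
qed

lemma sinv_mult: "sinv ((x::'a) * y) = sinv y * sinv x"
proof (rule sinv_eqI)
  have comm: "y * sinv y * (sinv x * x) = sinv x * x * (y * sinv y)"
    using idempotents_commute mult_sinv_idempotent sinv_mult_idempotent by blast
  have "x * y * (sinv y * sinv x) * (x * y) = x * (y * sinv y * (sinv x * x)) * y"
    by (simp add: mult.assoc)
  also have "\<dots> = x * (sinv x * x * (y * sinv y)) * y"
    by (simp only: comm)
  also have "\<dots> = (x * sinv x * x) * (y * sinv y * y)"
    by (simp add: mult.assoc)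
  finally show "x * y * (sinv y * sinv x) * (x * y) = x * y"
    by (simp add: mult_sinv_mult)
  have "sinv y * sinv x * (x * y) * (sinv y * sinv x) = sinv y * (sinv x * x * (y * sinv y)) * sinv x"
    by (simp add: mult.assoc)
  also have "\<dots> = sinv y * (y * sinv y * (sinv x * x)) * sinv x"
    by (simp only: comm)
  also have "\<dots> = (sinv y * y * sinv y) * (sinv x * x * sinv x)"
    by (simp add: mult.assoc)
  finally show "sinv y * sinv x * (x * y) * (sinv y * sinv x) = sinv y * sinv x"
    by (simp add: sinv_mult_sinv)
qed

lemma sinv_left_restriction: "sinv ((x::'a) * sinv x * y) = sinv y * (x * sinv x)"
  by (simp add: sinv_mult sinv_idempotent[OF mult_sinv_idempotent] mult.assoc)

lemma sinv_right_restriction: "sinv ((y::'a) * (sinv x * x)) = sinv x * x * sinv y"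
  by (simp add: sinv_mult sinv_idempotent[OF sinv_mult_idempotent] mult.assoc)

lemma left_restriction_mult:
  fixes a1 b1 c1 a2 b2 c2 :: 'a
  assumes c1: "c1 = b1 * sinv b1 * a1" "c1 = b1 * (sinv a1 * a1)"
    and c2: "c2 = b2 * sinv b2 * a2"
  shows "c1 * c2 = b1 * b2 * sinv (b1 * b2) * (a1 * a2)"
proof -
  define g where "g = sinv b1 * b1 * (sinv a1 * a1)"
  have "sinv b1 * a1 = sinv b1 * (b1 * sinv b1 * a1)"
    by (metis sinv_mult_sinv mult.assoc)
  also have "\<dots> = g"
    using c1 unfolding g_def by (simp add: mult.assoc)
  finally have g: "sinv b1 * a1 = g" .
  have "g * g = g"
    unfolding g_def using idempotent_mult sinv_mult_idempotent by blast
  then have comm: "b2 * sinv b2 * g = g * (b2 * sinv b2)"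
    using idempotents_commute mult_sinv_idempotent by blast
  have "b1 * b2 * sinv (b1 * b2) * (a1 * a2) = b1 * (b2 * sinv b2 * (sinv b1 * a1)) * a2"
    by (simp add: sinv_mult mult.assoc)
  also have "\<dots> = b1 * (g * (b2 * sinv b2)) * a2"
    by (simp only: g comm)
  also have "\<dots> = (b1 * sinv b1 * b1) * (sinv a1 * a1) * (b2 * sinv b2 * a2)"
    by (simp add: g_def mult.assoc)
  also have "\<dots> = c1 * c2"
    using c1 c2 by (simp only: mult_sinv_mult)
  finally show ?thesis by simp
qed

lemma right_restriction_mult:
  fixes a1 b1 c1 a2 b2 c2 :: 'a
  assumes c1: "c1 = a1 * (sinv b1 * b1)"
    and c2: "c2 = a2 * (sinv b2 * b2)" "c2 = a2 * sinv a2 * b2"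
  shows "c1 * c2 = a1 * a2 * (sinv (b1 * b2) * (b1 * b2))"
proof -
  have "sinv c2 = sinv b2 * sinv (sinv b2) * sinv a2"
    unfolding c2(1) by (simp add: sinv_right_restriction)
  moreover have "sinv c2 = sinv b2 * (sinv (sinv a2) * sinv a2)"
    unfolding c2(2) by (simp add: sinv_left_restriction)
  moreover have "sinv c1 = sinv b1 * sinv (sinv b1) * sinv a1"
    unfolding c1 by (simp add: sinv_right_restriction)
  ultimately have inverted:
    "sinv c2 * sinv c1 = sinv b2 * sinv b1 * sinv (sinv b2 * sinv b1) * (sinv a2 * sinv a1)"
    by (rule left_restriction_mult)
  have "c1 * c2 = sinv (sinv c2 * sinv c1)"
    by (simp add: sinv_mult)
  also have "\<dots> = sinv (sinv (b1 * b2) * sinv (sinv (b1 * b2)) * sinv (a1 * a2))"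
    unfolding inverted by (simp add: sinv_mult)
  also have "\<dots> = a1 * a2 * (sinv (b1 * b2) * (b1 * b2))"
    using sinv_left_restriction[of "sinv (b1 * b2)" "sinv (a1 * a2)"] by simp
  finally show ?thesis .
qed

lemma mutual_restriction_refl: "mutual_restriction (u::'a) u u"
  unfolding mutual_restriction_def by (metis mult_sinv_mult mult.assoc)

lemma mutual_restriction_sinv:
  "mutual_restriction a b (c::'a) \<Longrightarrow> mutual_restriction (sinv a) (sinv b) (sinv c)"
  unfolding mutual_restriction_def
  by (metis sinv_left_restriction sinv_right_restriction sinv_sinv)

lemma mutual_restriction_mult:
  assumes "mutual_restriction a1 b1 (c1::'a)" "mutual_restriction a2 b2 c2"
  shows "mutual_restriction (a1 * a2) (b1 * b2) (c1 * c2)"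
  using assms left_restriction_mult[of c1 b1 a1 c2 b2 a2] left_restriction_mult[of c1 a1 b1 c2 a2 b2]
    right_restriction_mult[of c1 a1 b1 c2 a2 b2] right_restriction_mult[of c1 b1 a1 c2 b2 a2]
  unfolding mutual_restriction_def by blast

lemma mutual_restriction_eval:
  fixes p q r :: "'a list"
  assumes "\<And>i. mutual_restriction (p ! i) (q ! i) (r ! i)"
  shows "mutual_restriction (eval p t) (eval q t) (eval r t)"
  by (induction t)
    (simp_all add: assms mutual_restriction_refl mutual_restriction_mult mutual_restriction_sinv)

lemma not_algebraic_swapped_idempotents:
  fixes e f :: 'a
  assumes e: "e * e = e" and f: "f * f = f" and e_le_f: "e * f = e" "f * e = e"
    and "e \<noteq> f"
  shows "\<not> algebraic 2 {[f, e], [e, f]}"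
proof
  assume "algebraic 2 {[f, e], [e, f]}"
  then obtain Sys :: "('a trm \<times> 'a trm) set" where
    Sys: "{[f, e], [e, f]} = {p. length p = 2 \<and> (\<forall>(t, u)\<in>Sys. eval p t = eval p u)}"
    unfolding algebraic_def by blast
  have "mutual_restriction f e e" "mutual_restriction e f e"
    using e f e_le_f sinv_idempotent[OF e] sinv_idempotent[OF f]
    by (simp_all add: mutual_restriction_def mult.assoc)
  then have restr: "mutual_restriction ([f, e] ! i) ([e, f] ! i) ([e, e] ! i)" for i
    by (simp add: nth_Cons' mutual_restriction_refl)
  have solution: "\<forall>(t, u)\<in>Sys. eval p t = eval p u" if "p \<in> {[f, e], [e, f]}" for p
    using that unfolding Sys by simp
  have "eval [e, e] t = eval [e, e] u" if "(t, u) \<in> Sys" for t u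
  proof -
    have "eval [f, e] t = eval [f, e] u" "eval [e, f] t = eval [e, f] u"
      using solution that by fastforce+
    then show ?thesis
      using mutual_restriction_eval[OF restr, of t] mutual_restriction_eval[OF restr, of u]
      unfolding mutual_restriction_def by metis
  qed
  then have "[e, e] \<in> {[f, e], [e, f]}"
    unfolding Sys by auto
  with \<open>e \<noteq> f\<close> show False by auto
qed

lemma not_equational_domain_if_idempotents_less:
  fixes e f :: 'a
  assumes "e * e = e" "f * f = f" "e * f = e" "f * e = e" "e \<noteq> f"
  shows "\<not> equational_domain TYPE('a)"
proof -
  have "algebraic 2 {[f, e]}" "algebraic 2 {[e, f]}"
    by (simp_all add: algebraic_singleton)
  moreover have "{[f, e], [e, f]} = \<Union>{{[f, e]}, {[e, f]}}"
    by auto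
  ultimately show ?thesis
    using not_algebraic_swapped_idempotents[OF assms] unfolding equational_domain_def
    by (metis empty_not_insert finite.emptyI finite_insert insert_iff singletonD)
qed

end

theorem lemma4:
  assumes "inverse_semigroup TYPE('a::semigroup_mult)"
    and "\<forall>e\<in>(idempotents :: 'a set). \<forall>f\<in>idempotents. nat_le_idem e f \<or> nat_le_idem f e"
    and "\<exists>e\<in>(idempotents :: 'a set). \<exists>f\<in>idempotents. e \<noteq> f"
  shows "\<not> equational_domain TYPE('a)"
proof -
  obtain e f :: 'a where e: "e * e = e" and f: "f * f = f" and "e \<noteq> f"
    and "e * f = e \<or> f * e = f"
    using assms(2,3) unfolding idempotents_def nat_le_idem_def by blast
  moreover have "e * f = f * e"
    using idempotents_commute[OF assms(1) e f] .
  ultimately show ?thesis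
    using not_equational_domain_if_idempotents_less[OF assms(1), of e f]
      not_equational_domain_if_idempotents_less[OF assms(1), of f e]
    by metis
qed

end
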